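(* Let $r = pq$ with integers $p, q > 1$, and let $M$ be an $r \times r$ binary circulant matrix (over $\mathbb{F}_2$) with first row $\mathbf{c} = (c_0, c_1, \ldots, c_{r-1})$. Let $k$ be an integer. (1) If $c_{(k+pi) \bmod r} = 1$ for $i = 0, 1, \ldots, q-1$ and all other entries of $\mathbf{c}$ are $0$, then $\operatorname{rank}(M) = p$. (2) If $c_{(k+i) \bmod r} = 1$ for $i = 0, 1, \ldots, p-1$ and all other entries of $\mathbf{c}$ are $0$, then $\operatorname{rank}(M) = r - p + 1$. Here rank is taken over $\mathbb{F}_2$.
   Context: An $r\times r$ circulant matrix is one in which each row is the cyclic right shift by one position of the row above it; it is determined by its first row. *)

theory Defs
  imports "HOL-Library.Z2" "Jordan_Normal_Form.DL_Rank"
begin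

definition circulant :: "nat \<Rightarrow> (nat \<Rightarrow> bit) \<Rightarrow> bit mat" where
  "circulant r c = mat r r (\<lambda>(i, j). c ((j + r - i) mod r))"

definition rank2 :: "nat \<Rightarrow> bit mat \<Rightarrow> nat" where
  "rank2 r M = vec_space.rank r M"

end

theory Submission
  imports Defs
begin

text \<open>Column j of the circulant matrix has i-th entry c((j - i) mod r). In case (1) it is therefore
  the indicator vector of the residue class of j - k modulo p: the column space is spanned by the
  p distinct class indicators, which are linearly independent. In case (2) it is the indicator of
  the window of p cyclically consecutive positions ending at j - k. The r - p + 1 windows that do
  not wrap around are linearly independent by triangularity, and they span the wrapping ones:
  over GF(2) a wrapping window is the all-ones vector plus an interval of length r - p, and since
  p divides r both are disjoint unions of non-wrapping windows.\<close>

context vec_space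
begin

lemma rank_eq_card_of_spanning_lin_indpt:
  assumes A: "A \<in> carrier_mat n nc"
    and S_cols: "S \<subseteq> set (cols A)" and cols_span: "set (cols A) \<subseteq> span S"
    and indpt: "lin_indpt S"
  shows "rank A = card S"
proof -
  have cols_carrier: "set (cols A) \<subseteq> carrier_vec n" using cols_dim A by blast
  with S_cols have S_carrier: "S \<subseteq> carrier_vec n" by blast
  have "span (set (cols A)) \<subseteq> span S"
    by (rule span_is_subset[OF cols_span span_is_submodule[OF S_carrier]])
  moreover have "span S \<subseteq> span (set (cols A))"
    using S_cols cols_carrier by (intro span_is_monotone)
  ultimately have "span (set (cols A)) = span S" by blast
  moreover have "maximal S (\<lambda>T. T \<subseteq> S \<and> lin_indpt T)"
    unfolding maximal_def using indpt by blast
  ultimately show ?thesis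
    using dim_span[OF S_carrier finite_subset[OF S_cols] _] unfolding rank_def by simp
qed

lemma triangular_inj_on:
  fixes f :: "'b::linorder \<Rightarrow> 'a vec" and pos :: "'b \<Rightarrow> nat"
  assumes diag: "\<And>b. b \<in> I \<Longrightarrow> f b $ pos b \<noteq> 0"
    and below: "\<And>b b'. b \<in> I \<Longrightarrow> b' \<in> I \<Longrightarrow> b' < b \<Longrightarrow> f b' $ pos b = 0"
  shows "inj_on f I"
proof
  fix b b' assume b: "b \<in> I" and b': "b' \<in> I" and eq: "f b = f b'"
  show "b = b'"
  proof (rule linorder_cases[of b b'])
    assume "b < b'" then show ?thesis using below[OF b' b] diag[OF b'] eq by simp
  next
    assume "b' < b" then show ?thesis using below[OF b b'] diag[OF b] eq by simp
  qed
qed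

lemma triangular_lin_indpt:
  fixes f :: "'b::linorder \<Rightarrow> 'a vec" and pos :: "'b \<Rightarrow> nat"
  assumes I: "finite I" and carrier: "f ` I \<subseteq> carrier_vec n"
    and pos: "\<And>b. b \<in> I \<Longrightarrow> pos b < n"
    and diag: "\<And>b. b \<in> I \<Longrightarrow> f b $ pos b \<noteq> 0"
    and below: "\<And>b b'. b \<in> I \<Longrightarrow> b' \<in> I \<Longrightarrow> b' < b \<Longrightarrow> f b' $ pos b = 0"
  shows "lin_indpt (f ` I)"
proof (rule finite_lin_indpt2[OF finite_imageI[OF I] carrier])
  fix a assume lc: "lincomb a (f ` I) = 0\<^sub>v n"
  have inj: "inj_on f I" using diag below by (rule triangular_inj_on)
  show "\<forall>v\<in>f ` I. a v = 0"
  proof (rule ccontr)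
    assume "\<not> (\<forall>v\<in>f ` I. a v = 0)"
    then have nonzero: "{b \<in> I. a (f b) \<noteq> 0} \<noteq> {}" by auto
    define b where "b = Max {b \<in> I. a (f b) \<noteq> 0}"
    have b: "b \<in> I" "a (f b) \<noteq> 0"
      using Max_in[OF _ nonzero] I unfolding b_def by auto
    have b_max: "a (f b') = 0" if "b' \<in> I" "b < b'" for b'
    proof (rule ccontr)
      assume "a (f b') \<noteq> 0"
      then have "b' \<le> b" using Max_ge[of "{b \<in> I. a (f b) \<noteq> 0}" b'] I that(1) by (simp add: b_def)
      with that(2) show False by simp
    qed
    have "0 = lincomb a (f ` I) $ pos b" using lc pos[OF b(1)] by simp
    also have "\<dots> = (\<Sum>b'\<in>I. a (f b') * f b' $ pos b)"
      using lincomb_index[OF pos[OF b(1)] carrier] sum.reindex[OF inj] by simp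
    also have "\<dots> = (\<Sum>b'\<in>{b}. a (f b') * f b' $ pos b)"
    proof (rule sum.mono_neutral_right[OF I])
      show "\<forall>b'\<in>I - {b}. a (f b') * f b' $ pos b = 0"
        using below[OF b(1)] b_max by (metis DiffE insertI1 linorder_neqE mult_zero_left mult_zero_right)
    qed (use b(1) in simp)
    finally show False using b(2) diag[OF b(1)] by simp
  qed
qed

end

lemma ex_mod_eq_multiple_offset_iff:
  fixes x k m :: int and q :: nat
  assumes "q > 0"
  shows "(\<exists>t<q. x mod (m * int q) = (k + m * int t) mod (m * int q)) \<longleftrightarrow> x mod m = k mod m"
proof
  assume "\<exists>t<q. x mod (m * int q) = (k + m * int t) mod (m * int q)"
  then obtain t where "m * int q dvd x - (k + m * int t)" by (auto simp: mod_eq_dvd_iff)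
  then have "m dvd (x - (k + m * int t)) + m * int t" by (meson dvd_add dvd_mult_left dvd_triv_left)
  then show "x mod m = k mod m" by (simp add: mod_eq_dvd_iff)
next
  assume "x mod m = k mod m"
  then obtain s where s: "x - k = m * s" by (auto simp: mod_eq_dvd_iff elim: dvdE)
  define t where "t = nat (s mod int q)"
  have t: "int t = s mod int q" "t < q" using assms by (auto simp: t_def nat_less_iff)
  have "x - (k + m * int t) = m * int q * (s div int q)"
    using s t(1) by (simp add: minus_mod_eq_mult_div[symmetric] algebra_simps)
  then have "x mod (m * int q) = (k + m * int t) mod (m * int q)" by (simp add: mod_eq_dvd_iff)
  with t(2) show "\<exists>t<q. x mod (m * int q) = (k + m * int t) mod (m * int q)" by blast
qed

lemma ex_mod_eq_offset_iff:
  fixes x k r :: int and p :: nat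
  assumes "r > 0"
  shows "(\<exists>t<p. x mod r = (k + int t) mod r) \<longleftrightarrow> (x - k) mod r < int p"
proof
  assume "\<exists>t<p. x mod r = (k + int t) mod r"
  then obtain t where t: "t < p" "r dvd x - (k + int t)" by (auto simp: mod_eq_dvd_iff)
  then have "(x - k) mod r = int t mod r" by (simp add: mod_eq_dvd_iff diff_diff_eq)
  also have "\<dots> \<le> int t" using assms by (simp add: zmod_le_nonneg_dividend)
  finally show "(x - k) mod r < int p" using t(1) by simp
next
  assume "(x - k) mod r < int p"
  moreover have "x mod r = (k + (x - k) mod r) mod r" by (simp add: mod_add_right_eq)
  ultimately show "\<exists>t<p. x mod r = (k + int t) mod r" using assms
    by (intro exI[of _ "nat ((x - k) mod r)"]) (auto simp: nat_less_iff)
qed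

lemma diff_mod_eq_if:
  fixes a :: int
  assumes "0 \<le> a" "a < int n" "i < n"
  shows "(a - int i) mod int n = (if int i \<le> a then a - int i else a - int i + int n)"
proof (cases "int i \<le> a")
  case False
  then have "(a - int i) mod int n = (a - int i + int n) mod int n" by simp
  also have "\<dots> = a - int i + int n" using False assms by (intro mod_pos_pos_trivial) auto
  finally show ?thesis using False by simp
qed (use assms in \<open>simp add: mod_pos_pos_trivial\<close>)

lemma circulant_carrier: "circulant r c \<in> carrier_mat r r"
  by (simp add: circulant_def)

lemma set_cols_circulant: "set (cols (circulant r c)) = col (circulant r c) ` {..<r}"
  by (auto simp: cols_def circulant_def)

lemma col_circulant_indicator:
  assumes c: "\<forall>j<r. c j = (if P (int j) then 1 else 0)" and j: "j < r"
  shows "col (circulant r c) j = vec r (\<lambda>i. if P ((int j - int i) mod int r) then 1 else 0)"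
proof (rule eq_vecI)
  fix i assume "i < dim_vec (vec r (\<lambda>i. if P ((int j - int i) mod int r) then 1 else 0 :: bit))"
  then have i: "i < r" by simp
  have "int ((j + r - i) mod r) = int (j + r - i) mod int r" by (simp add: zmod_int)
  also have "int (j + r - i) = (int j - int i) + int r" using i by simp
  finally have "int ((j + r - i) mod r) = (int j - int i) mod int r" by simp
  moreover have "(j + r - i) mod r < r" using i by simp
  ultimately show "col (circulant r c) j $ i = vec r (\<lambda>i. if P ((int j - int i) mod int r) then 1 else 0) $ i"
    using c i j unfolding circulant_def by (simp add: col_def)
qed (simp add: circulant_def)

definition residue_class_vec :: "nat \<Rightarrow> nat \<Rightarrow> int \<Rightarrow> bit vec" where
  "residue_class_vec n p s = vec n (\<lambda>i. if int i mod int p = s mod int p then 1 else 0)"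

definition cyclic_window :: "nat \<Rightarrow> nat \<Rightarrow> int \<Rightarrow> bit vec" where
  "cyclic_window n p a = vec n (\<lambda>i. if (a - int i) mod int n < int p then 1 else 0)"

definition interval_vec :: "nat \<Rightarrow> int \<Rightarrow> int \<Rightarrow> bit vec" where
  "interval_vec n s t = vec n (\<lambda>i. if s \<le> int i \<and> int i < t then 1 else 0)"

lemma residue_class_vec_carrier [simp]: "residue_class_vec n p s \<in> carrier_vec n"
  and cyclic_window_carrier [simp]: "cyclic_window n p a \<in> carrier_vec n"
  by (simp_all add: residue_class_vec_def cyclic_window_def)

lemma residue_class_vec_dim [simp]: "dim_vec (residue_class_vec n p s) = n"
  and cyclic_window_dim [simp]: "dim_vec (cyclic_window n p a) = n"
  and interval_vec_dim [simp]: "dim_vec (interval_vec n s t) = n"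
  by (simp_all add: residue_class_vec_def cyclic_window_def interval_vec_def)

lemma residue_class_vec_index [simp]:
  "i < n \<Longrightarrow> residue_class_vec n p s $ i = (if int i mod int p = s mod int p then 1 else 0)"
  by (simp add: residue_class_vec_def)

lemma cyclic_window_index [simp]:
  "i < n \<Longrightarrow> cyclic_window n p a $ i = (if (a - int i) mod int n < int p then 1 else 0)"
  by (simp add: cyclic_window_def)

lemma interval_vec_index [simp]:
  "i < n \<Longrightarrow> interval_vec n s t $ i = (if s \<le> int i \<and> int i < t then 1 else 0)"
  by (simp add: interval_vec_def)

lemma residue_class_vec_cong:
  "s mod int p = s' mod int p \<Longrightarrow> residue_class_vec n p s = residue_class_vec n p s'"
  by (simp add: residue_class_vec_def)

lemma cyclic_window_cong:
  "a mod int n = a' mod int n \<Longrightarrow> cyclic_window n p a = cyclic_window n p a'"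
  unfolding cyclic_window_def by (metis mod_diff_left_eq)

lemma interval_vec_append:
  assumes "s \<le> m" "m \<le> t"
  shows "interval_vec n s m + interval_vec n m t = interval_vec n s t"
  by (rule eq_vecI) (use assms in auto)

lemma cyclic_window_eq_interval_vec:
  assumes "0 < p" "int p \<le> a + 1" "a < int n"
  shows "cyclic_window n p a = interval_vec n (a + 1 - int p) (a + 1)"
proof (rule eq_vecI)
  fix i assume "i < dim_vec (interval_vec n (a + 1 - int p) (a + 1))"
  then have i: "i < n" by simp
  have "(a - int i) mod int n = (if int i \<le> a then a - int i else a - int i + int n)"
    using assms i by (intro diff_mod_eq_if) auto
  then show "cyclic_window n p a $ i = interval_vec n (a + 1 - int p) (a + 1) $ i"
    using assms i by auto
qed simp

lemma cyclic_window_eq_interval_vec_wrap: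
  assumes "0 \<le> a" "a + 1 < int p" "p \<le> n"
  shows "cyclic_window n p a = interval_vec n 0 (int n) + interval_vec n (a + 1) (a + 1 + int n - int p)"
proof (rule eq_vecI)
  fix i assume "i < dim_vec (interval_vec n 0 (int n) + interval_vec n (a + 1) (a + 1 + int n - int p))"
  then have i: "i < n" by simp
  have "(a - int i) mod int n = (if int i \<le> a then a - int i else a - int i + int n)"
    using assms i by (intro diff_mod_eq_if) auto
  then show "cyclic_window n p a $ i = (interval_vec n 0 (int n) + interval_vec n (a + 1) (a + 1 + int n - int p)) $ i"
    using assms i by auto
qed simp

locale circulant_pq =
  fixes p q r :: nat
  assumes p_pos: "0 < p" and q_pos: "0 < q" and r_eq: "r = p * q"
begin

interpretation V: vec_space "TYPE(bit)" r .

lemma p_le_r: "p \<le> r"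
  using q_pos r_eq by simp

definition residue_classes :: "bit vec set" where
  "residue_classes = (\<lambda>s. residue_class_vec r p (int s)) ` {..<p}"

definition windows :: "bit vec set" where
  "windows = (\<lambda>a. cyclic_window r p (int a)) ` {p - 1..<r}"

lemma residue_classes_carrier: "residue_classes \<subseteq> carrier_vec r"
  by (auto simp: residue_classes_def)

lemma windows_carrier: "windows \<subseteq> carrier_vec r"
  by (auto simp: windows_def)

lemma residue_classes_triangular:
  shows "inj_on (\<lambda>s. residue_class_vec r p (int s)) {..<p}"
    and "V.lin_indpt residue_classes"
proof -
  have diag: "residue_class_vec r p (int s) $ s \<noteq> 0" if "s \<in> {..<p}" for s
    using that p_le_r by simp
  have below: "residue_class_vec r p (int s') $ s = 0" if "s \<in> {..<p}" "s' \<in> {..<p}" "s' < s" for s s'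
    using that p_le_r by simp
  show "inj_on (\<lambda>s. residue_class_vec r p (int s)) {..<p}"
    using diag below by (rule V.triangular_inj_on)
  show "V.lin_indpt residue_classes"
    unfolding residue_classes_def
    by (rule V.triangular_lin_indpt[where pos = id]) (use diag below p_le_r in auto)
qed

lemma card_residue_classes: "card residue_classes = p"
  using card_image[OF residue_classes_triangular(1)] by (simp add: residue_classes_def)

lemma windows_triangular:
  shows "inj_on (\<lambda>a. cyclic_window r p (int a)) {p - 1..<r}"
    and "V.lin_indpt windows"
proof -
  have window: "cyclic_window r p (int a) = interval_vec r (int a + 1 - int p) (int a + 1)"
    if "a \<in> {p - 1..<r}" for a
    using that p_pos by (intro cyclic_window_eq_interval_vec) auto
  have diag: "cyclic_window r p (int a) $ a \<noteq> 0" if "a \<in> {p - 1..<r}" for a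
    using that window[OF that] p_pos by simp
  have below: "cyclic_window r p (int a') $ a = 0"
    if "a \<in> {p - 1..<r}" "a' \<in> {p - 1..<r}" "a' < a" for a a'
    using that window[OF that(2)] by simp
  show "inj_on (\<lambda>a. cyclic_window r p (int a)) {p - 1..<r}"
    using diag below by (rule V.triangular_inj_on)
  show "V.lin_indpt windows"
    unfolding windows_def
    by (rule V.triangular_lin_indpt[where pos = id]) (use diag below in auto)
qed

lemma card_windows: "card windows = r - p + 1"
  using card_image[OF windows_triangular(1)] p_pos p_le_r by (simp add: windows_def)

lemma interval_vec_in_span_windows:
  assumes "0 \<le> t" "t + int m * int p \<le> int r"
  shows "interval_vec r t (t + int m * int p) \<in> V.span windows"
  using assms
proof (induction m)
  case 0
  have "interval_vec r t (t + int 0 * int p) = 0\<^sub>v r" by (rule eq_vecI) auto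
  moreover have "0\<^sub>v r \<in> V.span windows" using vectorspace.span_zero[OF V.vectorspace_axioms] by simp
  ultimately show ?case by (simp only:)
next
  case (Suc m)
  let ?s = "t + int m * int p"
  define a where "a = nat (?s + int p - 1)"
  have mp: "0 \<le> int m * int p" by simp
  have bound: "?s + int p \<le> int r" using Suc.prems(2) by (simp add: algebra_simps)
  have "0 < ?s + int p" using Suc.prems(1) p_pos mp by linarith
  then have a: "int a = ?s + int p - 1" by (simp add: a_def)
  then have "int p \<le> int a + 1" "int a < int r" using Suc.prems(1) mp bound by linarith+
  then have "a \<in> {p - 1..<r}" by auto
  moreover have "interval_vec r ?s (?s + int p) = cyclic_window r p (int a)"
    using a Suc.prems p_pos by (subst cyclic_window_eq_interval_vec) (auto simp: algebra_simps)
  ultimately have "interval_vec r ?s (?s + int p) \<in> V.span windows"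
    using V.span_mem[OF windows_carrier] by (auto simp: windows_def)
  moreover have "interval_vec r t ?s \<in> V.span windows"
    by (rule Suc.IH[OF Suc.prems(1)]) (use bound in linarith)
  ultimately have "interval_vec r t ?s + interval_vec r ?s (?s + int p) \<in> V.span windows"
    using V.span_add1[OF windows_carrier] by blast
  moreover have "interval_vec r t ?s + interval_vec r ?s (?s + int p)
      = interval_vec r t (t + int (Suc m) * int p)"
    using Suc.prems(1) mp by (subst interval_vec_append) (auto simp: algebra_simps)
  ultimately show ?case by (simp only:)
qed

lemma cyclic_window_in_span_windows: "cyclic_window r p a \<in> V.span windows"
proof -
  define b where "b = a mod int r"
  have b: "0 \<le> b" "b < int r" using p_le_r p_pos by (auto simp: b_def)
  have "cyclic_window r p b \<in> V.span windows"
  proof (cases "int p \<le> b + 1")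
    case True
    then have "nat b \<in> {p - 1..<r}" using b by auto
    then have "cyclic_window r p b \<in> windows"
      using b(1) unfolding windows_def by (auto simp: image_iff intro!: bexI[of _ "nat b"])
    then show ?thesis by (rule V.span_mem[OF windows_carrier])
  next
    case False
    have q_blocks: "int q * int p = int r" "int (q - 1) * int p = int r - int p"
      using r_eq q_pos by (simp_all add: of_nat_diff algebra_simps)
    have "interval_vec r 0 (0 + int q * int p) \<in> V.span windows"
      by (rule interval_vec_in_span_windows) (use q_blocks in auto)
    moreover have "interval_vec r (b + 1) (b + 1 + int (q - 1) * int p) \<in> V.span windows"
      by (rule interval_vec_in_span_windows) (use q_blocks b False in auto)
    ultimately have "interval_vec r 0 (int r) + interval_vec r (b + 1) (b + 1 + int r - int p)
        \<in> V.span windows"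
      using V.span_add1[OF windows_carrier] q_blocks by (simp only: add_0 add_diff_eq)
    moreover have "cyclic_window r p b
        = interval_vec r 0 (int r) + interval_vec r (b + 1) (b + 1 + int r - int p)"
      using False b p_le_r by (intro cyclic_window_eq_interval_vec_wrap) auto
    ultimately show ?thesis by (simp only:)
  qed
  moreover have "cyclic_window r p b = cyclic_window r p a"
    unfolding b_def by (rule cyclic_window_cong) simp
  ultimately show ?thesis by (simp only:)
qed

lemma col_circulant_residue_pattern:
  assumes c: "\<forall>j<r. c j = (if \<exists>i<q. int j = (k + int p * int i) mod int r then 1 else 0)"
    and j: "j < r"
  shows "col (circulant r c) j = residue_class_vec r p (int j - k)"
proof -
  have "(\<exists>t<q. (int j - int i) mod int r = (k + int p * int t) mod int r)
      \<longleftrightarrow> int i mod int p = (int j - k) mod int p" for i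
  proof -
    have "(\<exists>t<q. (int j - int i) mod int r = (k + int p * int t) mod int r)
        \<longleftrightarrow> int p dvd (int j - int i) - k"
      using ex_mod_eq_multiple_offset_iff[OF q_pos, where x = "int j - int i" and k = k and m = "int p"] r_eq
      by (simp add: mod_eq_dvd_iff)
    also have "\<dots> \<longleftrightarrow> int p dvd int i - (int j - k)"
    proof -
      have "int i - (int j - k) = - ((int j - int i) - k)" by simp
      then show ?thesis by (simp only: dvd_minus_iff)
    qed
    finally show ?thesis by (simp add: mod_eq_dvd_iff)
  qed
  then show ?thesis
    using col_circulant_indicator[where P = "\<lambda>x. \<exists>t<q. x = (k + int p * int t) mod int r", OF c j]
    by (simp add: residue_class_vec_def)
qed

lemma set_cols_circulant_residue_pattern:
  assumes c: "\<forall>j<r. c j = (if \<exists>i<q. int j = (k + int p * int i) mod int r then 1 else 0)"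
  shows "set (cols (circulant r c)) = residue_classes"
proof
  show "set (cols (circulant r c)) \<subseteq> residue_classes"
  proof
    fix v assume "v \<in> set (cols (circulant r c))"
    then obtain j where j: "j < r" "v = col (circulant r c) j" by (auto simp: set_cols_circulant)
    define s where "s = nat ((int j - k) mod int p)"
    have s: "int s = (int j - k) mod int p" "s < p" using p_pos by (auto simp: s_def nat_less_iff)
    then have "v = residue_class_vec r p (int s)"
      using j col_circulant_residue_pattern[OF c] by (auto intro: residue_class_vec_cong)
    with s(2) show "v \<in> residue_classes" unfolding residue_classes_def by blast
  qed
  show "residue_classes \<subseteq> set (cols (circulant r c))"
  proof
    fix v assume "v \<in> residue_classes"
    then obtain s where v: "v = residue_class_vec r p (int s)" by (auto simp: residue_classes_def)
    define j where "j = nat ((int s + k) mod int r)"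
    have j: "j < r" "int j = (int s + k) mod int r" using p_le_r p_pos by (auto simp: j_def nat_less_iff)
    then have "int r dvd int j - (int s + k)" by (simp add: mod_eq_dvd_iff[symmetric])
    then have "int p * int q dvd (int j - k) - int s" using r_eq by (simp add: algebra_simps)
    then have "int p dvd (int j - k) - int s" by (rule dvd_mult_left)
    then have "col (circulant r c) j = v"
      using col_circulant_residue_pattern[OF c j(1)] v by (auto simp: mod_eq_dvd_iff intro: residue_class_vec_cong)
    then show "v \<in> set (cols (circulant r c))" using j(1) by (auto simp: set_cols_circulant)
  qed
qed

lemma rank_circulant_residue_pattern:
  assumes c: "\<forall>j<r. c j = (if \<exists>i<q. int j = (k + int p * int i) mod int r then 1 else 0)"
  shows "rank2 r (circulant r c) = p"
proof -
  note cols_eq = set_cols_circulant_residue_pattern[OF c]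
  have "set (cols (circulant r c)) \<subseteq> V.span residue_classes"
    using cols_eq V.span_mem[OF residue_classes_carrier] by blast
  then have "V.rank (circulant r c) = card residue_classes"
    using V.rank_eq_card_of_spanning_lin_indpt[OF circulant_carrier _ _ residue_classes_triangular(2)]
      cols_eq by blast
  then show ?thesis by (simp add: rank2_def card_residue_classes)
qed

lemma col_circulant_window_pattern:
  assumes c: "\<forall>j<r. c j = (if \<exists>i<p. int j = (k + int i) mod int r then 1 else 0)"
    and j: "j < r"
  shows "col (circulant r c) j = cyclic_window r p (int j - k)"
proof -
  have "(\<exists>t<p. (int j - int i) mod int r = (k + int t) mod int r)
      \<longleftrightarrow> (int j - k - int i) mod int r < int p" for i
    using ex_mod_eq_offset_iff[where x = "int j - int i" and k = k and r = "int r" and p = p] p_le_r p_pos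
    by (simp add: diff_diff_eq add.commute)
  then show ?thesis
    using col_circulant_indicator[where P = "\<lambda>x. \<exists>t<p. x = (k + int t) mod int r", OF c j]
    by (simp add: cyclic_window_def)
qed

lemma rank_circulant_window_pattern:
  assumes c: "\<forall>j<r. c j = (if \<exists>i<p. int j = (k + int i) mod int r then 1 else 0)"
  shows "rank2 r (circulant r c) = r - p + 1"
proof -
  let ?M = "circulant r c"
  note col = col_circulant_window_pattern[OF c]
  have cols_span: "set (cols ?M) \<subseteq> V.span windows"
  proof
    fix v assume "v \<in> set (cols ?M)"
    then obtain j where "j < r" "v = col ?M j" by (auto simp: set_cols_circulant)
    then have "v = cyclic_window r p (int j - k)" using col by simp
    then show "v \<in> V.span windows" using cyclic_window_in_span_windows by (simp only:)
  qed
  have windows_cols: "windows \<subseteq> set (cols ?M)"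
  proof
    fix v assume "v \<in> windows"
    then obtain a where v: "v = cyclic_window r p (int a)" by (auto simp: windows_def)
    define j where "j = nat ((int a + k) mod int r)"
    have j: "j < r" "int j = (int a + k) mod int r" using p_le_r p_pos by (auto simp: j_def nat_less_iff)
    then have "(int j - k) mod int r = int a mod int r" by (simp add: mod_diff_left_eq)
    then have "col ?M j = v" unfolding col[OF j(1)] v by (rule cyclic_window_cong)
    then show "v \<in> set (cols ?M)" using j(1) by (auto simp: set_cols_circulant)
  qed
  have "V.rank ?M = card windows"
    by (rule V.rank_eq_card_of_spanning_lin_indpt[OF circulant_carrier windows_cols cols_span windows_triangular(2)])
  then show ?thesis by (simp add: rank2_def card_windows)
qed

end

theorem theorem3:
  fixes p q r :: nat and k :: int and c :: "nat \<Rightarrow> bit"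
  assumes "p > 1" and "q > 1" and "r = p * q"
  shows "((\<forall>j<r. c j = (if \<exists>i<q. int j = (k + int p * int i) mod int r then 1 else 0))
            \<longrightarrow> rank2 r (circulant r c) = p)
       \<and> ((\<forall>j<r. c j = (if \<exists>i<p. int j = (k + int i) mod int r then 1 else 0))
            \<longrightarrow> rank2 r (circulant r c) = r - p + 1)"
proof -
  interpret circulant_pq p q r using assms by unfold_locales auto
  show ?thesis using rank_circulant_residue_pattern rank_circulant_window_pattern by blast
qed

end
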